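(* Let $q$ be a prime power, $n\ge1$, and let $k$ be an integer with $n(q-1)-\frac{q-1}{2}<k\le n(q-1)$. Put $\ell=n(q-1)-k$. Then \[\dim(\operatorname{Hull}(C_{n,k}^q))=\dim(C_{n,\ell}^q)-1=\binom{n+\ell}{\ell}-1.\]
   Context: For a prime power $q$ and integers $n\ge 1$, $k\ge 0$, the projective Reed-Muller code $C_{n,k}^q\subseteq \mathbb{F}_q^N$, $N=\frac{q^{n+1}-1}{q-1}$, is defined as follows. For each point of $\mathbb{P}^n(\mathbb{F}_q)$ choose the affine representative $(p_0,\dots,p_n)\in\mathbb{F}_q^{n+1}\setminus\{0\}$ whose left-most nonzero coordinate equals $1$, and fix an ordering $P_1',\dots,P_N'$ of these representatives. Then $C_{n,k}^q=\{(F(P_1'),\dots,F(P_N')) : F\in \mathbb{F}_q[x_0,\dots,x_n]_k\}$, where $\mathbb{F}_q[x_0,\dots,x_n]_k$ is the space of homogeneous polynomials of degree $k$ together with $0$ (so $C_{n,0}^q$ is spanned by the all-ones vector). Duals are with respect to the standard dot product, and $\operatorname{Hull}(C)=C\cap C^\perp$. *)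

theory Defs
  imports Complex_Main "HOL-Computational_Algebra.Primes" "HOL-Library.Function_Algebras" "HOL-Library.Cardinality"
begin

text \<open>Points of P^n(F_q): affine representatives p : nat => 'a with p i = 0 for i > n
  (coordinates p 0, ..., p n), not all zero, whose left-most nonzero coordinate equals 1.\<close>
definition proj_points :: "nat \<Rightarrow> (nat \<Rightarrow> 'a::field) set" where
  "proj_points n = {p. (\<forall>i>n. p i = 0) \<and>
      (\<exists>j\<le>n. p j = 1 \<and> (\<forall>i<j. p i = 0))}"

definition monomials :: "nat \<Rightarrow> nat \<Rightarrow> (nat \<Rightarrow> nat) set" where
  "monomials n k = {a. (\<forall>i>n. a i = 0) \<and> (\<Sum>i\<le>n. a i) = k}"

definition hom_poly_eval :: "nat \<Rightarrow> nat \<Rightarrow> ((nat \<Rightarrow> nat) \<Rightarrow> 'a::field) \<Rightarrow> (nat \<Rightarrow> 'a) \<Rightarrow> 'a" where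
  "hom_poly_eval n k c p = (\<Sum>a\<in>monomials n k. c a * (\<Prod>i\<le>n. p i ^ a i))"

text \<open>Words of length N are functions on proj_points n (extended by 0 outside);
  the coordinate order is irrelevant for all notions used here.\<close>
definition words :: "nat \<Rightarrow> ((nat \<Rightarrow> 'a::field) \<Rightarrow> 'a) set" where
  "words n = {v. \<forall>p. p \<notin> proj_points n \<longrightarrow> v p = 0}"

definition PRM :: "nat \<Rightarrow> nat \<Rightarrow> ((nat \<Rightarrow> 'a::field) \<Rightarrow> 'a) set" where
  "PRM n k = {(\<lambda>p. if p \<in> proj_points n then hom_poly_eval n k c p else 0) | c. True}"

definition dot :: "nat \<Rightarrow> ((nat \<Rightarrow> 'a::field) \<Rightarrow> 'a) \<Rightarrow> ((nat \<Rightarrow> 'a) \<Rightarrow> 'a) \<Rightarrow> 'a" where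
  "dot n v w = (\<Sum>p\<in>proj_points n. v p * w p)"

definition dual_code :: "nat \<Rightarrow> ((nat \<Rightarrow> 'a::field) \<Rightarrow> 'a) set \<Rightarrow> ((nat \<Rightarrow> 'a) \<Rightarrow> 'a) set" where
  "dual_code n C = {v \<in> words n. \<forall>w\<in>C. dot n v w = 0}"

definition code_hull :: "nat \<Rightarrow> ((nat \<Rightarrow> 'a::field) \<Rightarrow> 'a) set \<Rightarrow> ((nat \<Rightarrow> 'a) \<Rightarrow> 'a) set" where
  "code_hull n C = C \<inter> dual_code n C"

definition code_dim :: "((nat \<Rightarrow> 'a::field) \<Rightarrow> 'a) set \<Rightarrow> nat" where
  "code_dim C = vector_space.dim (\<lambda>(c::'a) v. (\<lambda>p. c * v p)) C"

end

theory Submission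
  imports Defs "HOL-Computational_Algebra.Polynomial" "HOL-Library.FuncSet"
begin

text \<open>Let \<open>q\<close> be the size of the field and \<open>l = n(q - 1) - k\<close>, so that \<open>2l < q - 1\<close>.
  Summing a monomial \<open>x\<^sup>c\<close> over the projective space stratum by stratum (according to the
  leading coordinate) gives products of power sums \<open>\<Sum>\<^sub>x x\<^sup>e\<close>, which vanish unless \<open>q - 1\<close>
  divides \<open>e > 0\<close>. Consequently \<open>C\<^sub>l\<close> is orthogonal to \<open>C\<^sub>k\<close> (total degree \<open>n(q - 1)\<close>), and
  the Gram matrix of the monomial words of degree \<open>l\<close> is the indicator of \<open>x\<^sub>n\<^sup>l\<close>. Conversely,
  a word orthogonal to \<open>C\<^sub>k\<close> agrees on the affine chart \<open>x\<^sub>0 = 1\<close> with its interpolation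
  polynomial, whose coefficients of degree \<open>> l\<close> vanish, and at each point at infinity it is
  tested against an explicit point indicator of degree \<open>k\<close>; hence the dual of \<open>C\<^sub>k\<close> is \<open>C\<^sub>l\<close>
  and \<open>Hull(C\<^sub>k) = C\<^sub>k \<inter> C\<^sub>l\<close>. Every monomial of degree \<open>l\<close> other than \<open>x\<^sub>n\<^sup>l\<close> agrees on
  the projective space with a form of degree \<open>k\<close>, while \<open>x\<^sub>n\<^sup>l\<close> is not orthogonal to itself; as
  the monomial words of degree \<open>l < q - 1\<close> are linearly independent, the hull has dimension
  \<open>(n + l choose l) - 1\<close>.\<close>

section \<open>Finite fields\<close>

lemma two_le_card_field: "2 \<le> CARD('a::{finite,field})"
proof -
  have "card {0::'a, 1} \<le> CARD('a)" by (rule card_mono) auto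
  then show ?thesis by simp
qed

lemma of_nat_card_field: "of_nat CARD('a::{finite,field}) = (0::'a)"
proof -
  have "(\<Sum>x\<in>UNIV. x + 1) = (\<Sum>x\<in>(UNIV::'a set). x)"
    by (rule sum.reindex_bij_witness[of _ "\<lambda>x. x - 1" "\<lambda>x. x + 1"]) auto
  then show ?thesis by (simp add: sum.distrib)
qed

lemma power_card_minus_one:
  "(x::'a::{finite,field}) ^ (CARD('a) - 1) = (if x = 0 then 0 else 1)"
proof (cases "x = 0")
  case True
  then show ?thesis using two_le_card_field[where 'a='a] by (simp add: power_0_left)
next
  case False
  let ?U = "UNIV - {0::'a}"
  have "(\<Prod>y\<in>?U. x * y) = (\<Prod>y\<in>?U. y)"
    by (rule prod.reindex_bij_witness[of _ "\<lambda>y. y / x" "\<lambda>y. x * y"]) (use False in auto)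
  moreover have "(\<Prod>y\<in>?U. x * y) = x ^ card ?U * (\<Prod>y\<in>?U. y)"
    by (simp add: prod.distrib)
  moreover have "(\<Prod>y\<in>?U. y) \<noteq> 0" by simp
  moreover have "card ?U = CARD('a) - 1" by (simp add: card_Diff_subset)
  ultimately show ?thesis using False by auto
qed

lemma power_card_field: "(x::'a::{finite,field}) ^ CARD('a) = x"
proof -
  have "x ^ CARD('a) = x * x ^ (CARD('a) - 1)"
    using two_le_card_field[where 'a='a] by (simp add: power_eq_if)
  then show ?thesis using power_card_minus_one[of x] by simp
qed

lemma exists_power_neq_one:
  assumes "0 < r" "r < CARD('a::{finite,field}) - 1"
  shows "\<exists>c::'a. c \<noteq> 0 \<and> c ^ r \<noteq> 1"
proof (rule ccontr)
  assume "\<not> ?thesis"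
  then have roots: "UNIV - {0::'a} \<subseteq> {x. poly (monom 1 r - 1) x = 0}"
    by (auto simp: poly_monom)
  have "degree (monom (1::'a) r - 1) \<le> r"
    by (intro degree_diff_le) (auto simp: degree_monom_le)
  moreover have "monom (1::'a) r - 1 \<noteq> 0"
  proof
    assume "monom (1::'a) r - 1 = 0"
    then have "coeff (monom (1::'a) r - 1) r = 0" by simp
    then show False using assms by simp
  qed
  ultimately have "card {x::'a. poly (monom 1 r - 1) x = 0} \<le> r"
    using card_poly_roots_bound le_trans by metis
  moreover have "card (UNIV - {0::'a}) \<le> card {x::'a. poly (monom 1 r - 1) x = 0}"
    by (rule card_mono[OF _ roots]) simp
  moreover have "card (UNIV - {0::'a}) = CARD('a) - 1"
    by (simp add: card_Diff_subset)
  ultimately show False using assms by simp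
qed

definition power_sum :: "nat \<Rightarrow> 'a::{finite,field}" where
  "power_sum e = (\<Sum>x\<in>UNIV. x ^ e)"

lemma exists_power_neq_one_if_not_dvd:
  assumes "\<not> (CARD('a::{finite,field}) - 1) dvd e"
  shows "\<exists>c::'a. c \<noteq> 0 \<and> c ^ e \<noteq> 1"
proof -
  let ?q = "CARD('a)"
  define r where "r = e mod (?q - 1)"
  have "0 < r" "r < ?q - 1"
    using assms two_le_card_field[where 'a='a] unfolding r_def
    by (auto simp: mod_eq_0_iff_dvd[symmetric])
  then obtain c :: 'a where c: "c \<noteq> 0" "c ^ r \<noteq> 1"
    using exists_power_neq_one by blast
  have "e = (?q - 1) * (e div (?q - 1)) + r"
    unfolding r_def by simp
  then have "c ^ e = c ^ ((?q - 1) * (e div (?q - 1)) + r)"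
    by (rule arg_cong)
  also have "\<dots> = (c ^ (?q - 1)) ^ (e div (?q - 1)) * c ^ r"
    by (simp only: power_add power_mult)
  finally show ?thesis
    using c power_card_minus_one[of c] by auto
qed

lemma power_sum_eq_0_if_not_dvd:
  assumes "\<not> (CARD('a::{finite,field}) - 1) dvd e"
  shows "power_sum e = (0::'a)"
proof -
  obtain c :: 'a where c: "c \<noteq> 0" "c ^ e \<noteq> 1"
    using exists_power_neq_one_if_not_dvd[OF assms] by blast
  have "power_sum e = (\<Sum>x\<in>UNIV. (c * x) ^ e)"
    unfolding power_sum_def
    by (rule sum.reindex_bij_witness[of _ "\<lambda>x. c * x" "\<lambda>x. x / c"]) (use c in auto)
  also have "\<dots> = c ^ e * power_sum e"
    by (simp add: power_sum_def power_mult_distrib sum_distrib_left)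
  finally have "(1 - c ^ e) * power_sum e = 0"
    by (simp add: algebra_simps)
  then show ?thesis using c by simp
qed

lemma power_sum_eq:
  "power_sum e = (if 0 < e \<and> (CARD('a::{finite,field}) - 1) dvd e then -1 else (0::'a))"
proof -
  let ?q = "CARD('a)"
  consider "e = 0" | "0 < e" "(?q - 1) dvd e" | "\<not> (?q - 1) dvd e"
    by fastforce
  then show ?thesis
  proof cases
    case 1
    then show ?thesis by (simp add: power_sum_def of_nat_card_field)
  next
    case 2
    then obtain m where m: "e = (?q - 1) * m" by blast
    have "power_sum e = (\<Sum>x\<in>UNIV - {0::'a}. x ^ e)"
      unfolding power_sum_def using 2 by (subst sum.remove[of _ 0]) (auto simp: power_0_left)
    also have "\<dots> = (\<Sum>x\<in>UNIV - {0::'a}. 1)"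
      by (rule sum.cong) (auto simp: m power_mult power_card_minus_one[simplified])
    also have "\<dots> = of_nat ?q - 1"
      by (simp add: card_Diff_subset of_nat_diff)
    finally show ?thesis using 2 by (simp add: of_nat_card_field)
  next
    case 3
    then show ?thesis by (simp add: power_sum_eq_0_if_not_dvd)
  qed
qed

section \<open>Sums over boxes\<close>

definition box :: "'i set \<Rightarrow> 'b set \<Rightarrow> ('i \<Rightarrow> 'b) \<Rightarrow> ('i \<Rightarrow> 'b) set" where
  "box I S d = {p. (\<forall>i\<in>I. p i \<in> S) \<and> (\<forall>i. i \<notin> I \<longrightarrow> p i = d i)}"

lemma box_eq_image_PiE: "box I S d = (\<lambda>g i. if i \<in> I then g i else d i) ` PiE I (\<lambda>_. S)"
proof (intro set_eqI iffI)
  fix p assume "p \<in> box I S d"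
  then show "p \<in> (\<lambda>g i. if i \<in> I then g i else d i) ` PiE I (\<lambda>_. S)"
    by (intro image_eqI[where x = "restrict p I"]) (auto simp: box_def fun_eq_iff)
qed (auto simp: box_def)

lemma finite_box: "finite I \<Longrightarrow> finite S \<Longrightarrow> finite (box I S d)"
  by (simp add: box_eq_image_PiE finite_PiE)

lemma sum_prod_box:
  fixes f :: "'i \<Rightarrow> 'b \<Rightarrow> 'c::comm_semiring_1"
  assumes "finite I" "finite S"
  shows "(\<Sum>p\<in>box I S d. \<Prod>i\<in>I. f i (p i)) = (\<Prod>i\<in>I. \<Sum>x\<in>S. f i x)"
proof -
  have "(\<Prod>i\<in>I. \<Sum>x\<in>S. f i x) = (\<Sum>g\<in>PiE I (\<lambda>_. S). \<Prod>i\<in>I. f i (g i))"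
    using assms by (rule prod_sum_PiE)
  also have "\<dots> = (\<Sum>p\<in>box I S d. \<Prod>i\<in>I. f i (p i))"
    by (rule sum.reindex_bij_witness[of _ "\<lambda>p. restrict p I" "\<lambda>g i. if i \<in> I then g i else d i"])
      (auto simp: box_def restrict_def PiE_iff extensional_def intro!: prod.cong)
  finally show ?thesis ..
qed

lemma atMost_split_at: "j \<le> n \<Longrightarrow> {..n} = {..<j} \<union> insert j {j<..n::nat}"
  by auto

lemma sum_atMost_split_at:
  fixes j n :: nat
  assumes "j \<le> n"
  shows "(\<Sum>i\<le>n. h i) = (\<Sum>i<j. h i) + h j + (\<Sum>i\<in>{j<..n}. h i :: 'b::comm_monoid_add)"
  unfolding atMost_split_at[OF assms] by (subst sum.union_disjoint) (auto simp: add.assoc)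

lemma prod_atMost_split_at:
  fixes j n :: nat
  assumes "j \<le> n"
  shows "(\<Prod>i\<le>n. h i) = (\<Prod>i<j. h i) * h j * (\<Prod>i\<in>{j<..n}. h i :: 'b::comm_monoid_mult)"
  unfolding atMost_split_at[OF assms] by (subst prod.union_disjoint) (auto simp: mult.assoc)

section \<open>Strata of the projective space\<close>

text \<open>\<open>stratum n 0\<close> is the affine chart \<open>x\<^sub>0 = 1\<close>; the strata with \<open>j \<ge> 1\<close> make up
  the hyperplane \<open>x\<^sub>0 = 0\<close> at infinity.\<close>

definition stratum :: "nat \<Rightarrow> nat \<Rightarrow> (nat \<Rightarrow> 'a::field) set" where
  "stratum n j = {p. (\<forall>i>n. p i = 0) \<and> (\<forall>i<j. p i = 0) \<and> p j = 1}"

lemma stratum_eq_box: "j \<le> n \<Longrightarrow> stratum n j = box {j<..n} UNIV (\<lambda>i. if i = j then 1 else 0)"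
  unfolding stratum_def box_def by auto

lemma proj_points_eq_UN_stratum: "proj_points n = (\<Union>j\<le>n. stratum n j)"
  unfolding proj_points_def stratum_def by auto

lemma disjoint_stratum: "i \<noteq> j \<Longrightarrow> stratum n i \<inter> stratum n j = {}"
  unfolding stratum_def by (auto; metis linorder_neqE_nat zero_neq_one)

lemma finite_stratum: "finite (stratum n j :: (nat \<Rightarrow> 'a::{finite,field}) set)"
proof (cases "j \<le> n")
  case True
  then show ?thesis by (simp add: stratum_eq_box finite_box)
next
  case False
  then have "stratum n j = ({} :: (nat \<Rightarrow> 'a) set)" by (auto simp: stratum_def)
  then show ?thesis by simp
qed

lemma finite_proj_points: "finite (proj_points n :: (nat \<Rightarrow> 'a::{finite,field}) set)"
  by (simp add: proj_points_eq_UN_stratum finite_stratum)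

lemma sum_proj_points_strata:
  "(\<Sum>p\<in>proj_points n. g p) = (\<Sum>j\<le>n. \<Sum>p\<in>stratum n j. g (p :: nat \<Rightarrow> 'a::{finite,field}))"
  unfolding proj_points_eq_UN_stratum
  by (rule sum.UNION_disjoint) (auto simp: finite_stratum disjoint_stratum)

lemma proj_pointsE:
  assumes "p \<in> proj_points n"
  obtains j where "j \<le> n" "p \<in> stratum n j"
  using assms unfolding proj_points_eq_UN_stratum by blast

lemma stratum_0_subset_proj_points: "stratum n 0 \<subseteq> proj_points n"
  by (auto simp: proj_points_eq_UN_stratum)

lemma proj_points_not_stratum_0: "p \<in> proj_points n \<Longrightarrow> p \<notin> stratum n 0 \<Longrightarrow> p 0 = 0"
  by (auto simp: proj_points_eq_UN_stratum stratum_def)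

lemma stratum_eqI:
  assumes "p \<in> stratum n j" "p' \<in> stratum n j" "\<forall>i\<in>{j<..n}. p i = p' i"
  shows "p = p'"
proof
  fix x show "p x = p' x"
    using assms by (cases x j rule: linorder_cases; cases "x \<le> n") (auto simp: stratum_def)
qed

section \<open>Sums of monomials over the projective space\<close>

definition monomial :: "nat \<Rightarrow> (nat \<Rightarrow> nat) \<Rightarrow> (nat \<Rightarrow> 'a::field) \<Rightarrow> 'a" where
  "monomial n a p = (\<Prod>i\<le>n. p i ^ a i)"

lemma monomial_mult: "monomial n a p * monomial n b p = monomial n (\<lambda>i. a i + b i) p"
  by (simp add: monomial_def prod.distrib[symmetric] power_add)

lemma monomial_stratum_0: "p \<in> stratum n 0 \<Longrightarrow> monomial n a p = (\<Prod>i\<in>{0<..n}. p i ^ a i)"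
  using prod_atMost_split_at[of 0 n "\<lambda>i. p i ^ a i"] by (simp add: monomial_def stratum_def)

lemma sum_stratum_monomial:
  assumes "j \<le> n"
  shows "(\<Sum>p\<in>stratum n j. monomial n c p)
    = (if \<forall>i<j. c i = 0 then \<Prod>i\<in>{j<..n}. power_sum (c i) else (0::'a::{finite,field}))"
proof (cases "\<forall>i<j. c i = 0")
  case True
  have "monomial n c p = (\<Prod>i\<in>{j<..n}. p i ^ c i)" if "p \<in> stratum n j" for p :: "nat \<Rightarrow> 'a"
    using that True prod_atMost_split_at[OF assms, of "\<lambda>i. p i ^ c i"]
    by (simp add: monomial_def stratum_def)
  then have "(\<Sum>p\<in>stratum n j. monomial n c p) = (\<Sum>p\<in>stratum n j. \<Prod>i\<in>{j<..n}. (p i :: 'a) ^ c i)"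
    by (intro sum.cong) auto
  also have "\<dots> = (\<Prod>i\<in>{j<..n}. power_sum (c i))"
    unfolding stratum_eq_box[OF assms] power_sum_def by (rule sum_prod_box) auto
  finally show ?thesis using True by simp
next
  case False
  then obtain i where i: "i < j" "c i \<noteq> 0" by blast
  have "monomial n c p = 0" if "p \<in> stratum n j" for p :: "nat \<Rightarrow> 'a"
    unfolding monomial_def using i assms that by (intro prod_zero) (auto simp: stratum_def)
  then have "(\<Sum>p\<in>stratum n j. monomial n c p) = (0::'a)" by simp
  with False show ?thesis by (subst if_not_P) auto
qed

definition proj_sum :: "nat \<Rightarrow> (nat \<Rightarrow> nat) \<Rightarrow> 'a::{finite,field}" where
  "proj_sum n c = (\<Sum>p\<in>proj_points n. monomial n c p)"

lemma proj_sum_strata: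
  "proj_sum n c = (\<Sum>j\<le>n. if \<forall>i<j. c i = 0 then \<Prod>i\<in>{j<..n}. power_sum (c i) else 0)"
  unfolding proj_sum_def sum_proj_points_strata by (simp add: sum_stratum_monomial)

lemma power_sum_0: "power_sum 0 = (0::'a::{finite,field})"
  by (simp add: power_sum_eq)

lemma power_sum_neq_0_iff:
  "power_sum e \<noteq> (0::'a::{finite,field}) \<longleftrightarrow> 0 < e \<and> (CARD('a) - 1) dvd e"
  by (simp add: power_sum_eq)

lemma proj_sum_low_degree:
  assumes "(\<Sum>i\<le>n. c i) < CARD('a::{finite,field}) - 1"
  shows "(proj_sum n c :: 'a) = (if \<forall>i<n. c i = 0 then 1 else 0)"
proof -
  have "c n < CARD('a) - 1"
    using assms member_le_sum[of n "{..n}" c] by auto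
  then have "power_sum (c n) = (0::'a)"
    by (auto simp: power_sum_eq dest: dvd_imp_le)
  then have "(if \<forall>i<j. c i = 0 then \<Prod>i\<in>{j<..n}. power_sum (c i) else 0) = (0::'a)" if "j < n" for j
    using that by (auto intro: prod_zero)
  then show ?thesis
    by (simp add: proj_sum_strata lessThan_Suc_atMost[symmetric])
qed

text \<open>For the first variable \<open>x\<^sub>z\<close> of the monomial, only the strata \<open>z - 1\<close> and \<open>z\<close>
  contribute: the later ones fail \<open>\<forall>i<j. c i = 0\<close>, the earlier ones contain the factor
  \<open>power_sum (c (j + 1)) = power_sum 0 = 0\<close>.\<close>

lemma proj_sum_eq_leading:
  assumes z: "z \<le> n" "0 < c z" "\<forall>i<z. c i = 0"
  shows "(proj_sum n c :: 'a::{finite,field})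
    = (if z = 0 then 1 else 1 + power_sum (c z)) * (\<Prod>i\<in>{z<..n}. power_sum (c i))"
proof -
  define t where "t j = (if \<forall>i<j. c i = 0 then \<Prod>i\<in>{j<..n}. power_sum (c i) else (0::'a))" for j
  have vanish: "t j = 0" if "j \<notin> {z - 1, z}" for j
  proof (cases "z < j")
    case True
    then show ?thesis using z(2) by (auto simp: t_def)
  next
    case False
    then have "Suc j \<in> {j<..n}" "c (Suc j) = 0" using that z by auto
    then show ?thesis unfolding t_def by (auto simp: power_sum_0 intro!: prod_zero bexI[of _ "Suc j"])
  qed
  have "proj_sum n c = (\<Sum>j\<le>n. t j)"
    by (simp add: proj_sum_strata t_def)
  also have "\<dots> = (\<Sum>j\<in>{z - 1, z}. t j)"
    by (rule sum.mono_neutral_right) (use z(1) vanish in auto)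
  also have "\<dots> = (if z = 0 then 1 else 1 + power_sum (c z)) * t z"
  proof (cases "z = 0")
    case False
    then have "{z - 1<..n} = insert z {z<..n}" using z(1) by auto
    then have "t (z - 1) = power_sum (c z) * t z" using z(3) by (simp add: t_def)
    then show ?thesis using False by (simp add: algebra_simps)
  qed simp
  also have "t z = (\<Prod>i\<in>{z<..n}. power_sum (c i))"
    using z(3) by (simp add: t_def)
  finally show ?thesis .
qed

lemma proj_sum_top_degree:
  assumes n: "n \<ge> 1" and deg: "(\<Sum>i\<le>n. c i) = n * (CARD('a::{finite,field}) - 1)"
  shows "(proj_sum n c :: 'a) = 0"
proof -
  let ?q = "CARD('a)"
  have "(\<Sum>i\<le>n. c i) \<noteq> 0" using deg n two_le_card_field[where 'a='a] by simp
  then obtain i where "i \<le> n" "0 < c i" by auto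
  define z where "z = (LEAST m. 0 < c m)"
  have z: "0 < c z" "\<forall>m<z. c m = 0"
    unfolding z_def using \<open>0 < c i\<close> by (auto intro: LeastI dest: not_less_Least)
  have "z \<le> n"
    unfolding z_def using \<open>i \<le> n\<close> \<open>0 < c i\<close> by (auto intro: Least_le le_trans)
  show ?thesis
  proof (cases "\<forall>i\<in>{z<..n}. power_sum (c i) \<noteq> (0::'a)")
    case False
    then have "(\<Prod>i\<in>{z<..n}. power_sum (c i)) = (0::'a)" by (auto intro: prod_zero)
    with proj_sum_eq_leading[OF \<open>z \<le> n\<close> z, where 'a='a] show ?thesis by simp
  next
    case True
    then have tail: "\<forall>i\<in>{z<..n}. 0 < c i \<and> (?q - 1) dvd c i"
      by (simp add: power_sum_neq_0_iff)
    have "(n - z) * (?q - 1) \<le> (\<Sum>i\<in>{z<..n}. c i)"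
      using sum_bounded_below[of "{z<..n}" "?q - 1" c] tail by (simp add: dvd_imp_le)
    moreover have cz: "c z = n * (?q - 1) - (\<Sum>i\<in>{z<..n}. c i)"
      using sum_atMost_split_at[OF \<open>z \<le> n\<close>, of c] z(2) deg by simp
    ultimately have "z \<noteq> 0" using z(1) by (intro notI) auto
    have "(?q - 1) dvd (\<Sum>i\<in>{z<..n}. c i)"
      using tail by (intro dvd_sum) auto
    then have "(?q - 1) dvd c z"
      unfolding cz by (intro dvd_diff_nat) auto
    then have "power_sum (c z) = (-1::'a)"
      using z(1) by (simp add: power_sum_eq)
    then show ?thesis using proj_sum_eq_leading[OF \<open>z \<le> n\<close> z, where 'a='a] \<open>z \<noteq> 0\<close> by simp
  qed
qed

section \<open>Homogeneous forms and their words\<close>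

definition forms :: "nat \<Rightarrow> nat \<Rightarrow> ((nat \<Rightarrow> 'a::field) \<Rightarrow> 'a) set" where
  "forms n d = {hom_poly_eval n d c | c. True}"

definition word_of :: "nat \<Rightarrow> ((nat \<Rightarrow> 'a::field) \<Rightarrow> 'a) \<Rightarrow> (nat \<Rightarrow> 'a) \<Rightarrow> 'a" where
  "word_of n f = (\<lambda>p. if p \<in> proj_points n then f p else 0)"

lemma PRM_eq_image_forms: "PRM n d = word_of n ` forms n d"
  unfolding PRM_def forms_def word_of_def by auto

lemma word_of_in_words: "word_of n f \<in> words n"
  by (simp add: words_def word_of_def)

lemma dot_word_of: "dot n v (word_of n f) = (\<Sum>p\<in>proj_points n. v p * f p)"
  unfolding dot_def word_of_def by (rule sum.cong) auto

lemma sum_fun_apply: "(\<Sum>x\<in>A. f x) p = (\<Sum>x\<in>A. f x p)"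
  by (induction A rule: infinite_finite_induct) auto

lemma word_of_sum: "word_of n (\<lambda>p. \<Sum>a\<in>A. c a * f a p) = (\<Sum>a\<in>A. (\<lambda>p. c a * word_of n (f a) p))"
  by (auto simp: word_of_def fun_eq_iff sum_fun_apply)

lemma monomials_le_degree: "a \<in> monomials n d \<Longrightarrow> a i \<le> d"
  using member_le_sum[of i "{..n}" a] by (cases "i \<le> n") (auto simp: monomials_def)

lemma monomials_eqI:
  assumes "a \<in> monomials n d" "b \<in> monomials n d" "\<forall>i\<in>{0<..n}. a i = b i"
  shows "a = b"
proof -
  have "(\<Sum>i\<in>{0<..n}. a i) = (\<Sum>i\<in>{0<..n}. b i)"
    using assms(3) by (intro sum.cong) auto
  moreover have "a 0 + (\<Sum>i\<in>{0<..n}. a i) = b 0 + (\<Sum>i\<in>{0<..n}. b i)"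
    using assms(1,2) sum_atMost_split_at[of 0 n a] sum_atMost_split_at[of 0 n b]
    by (simp add: monomials_def)
  ultimately have "a 0 = b 0" by simp
  then show ?thesis
    using assms by (auto simp: monomials_def fun_eq_iff) (metis not_le neq0_conv greaterThanAtMost_iff)
qed

lemma monomials_subset_box: "monomials n d \<subseteq> box {..n} {..d} (\<lambda>_. 0)"
  using monomials_le_degree by (fastforce simp: monomials_def box_def)

lemma finite_monomials: "finite (monomials n d)"
  by (rule finite_subset[OF monomials_subset_box finite_box]) auto

lemma monomials_0: "monomials 0 l = {\<lambda>i. if i = 0 then l else 0}"
  unfolding monomials_def by (auto simp: fun_eq_iff)

lemma monomials_Suc:
  "monomials (Suc n) l = (\<Union>t\<le>l. (\<lambda>a. a(Suc n := t)) ` monomials n (l - t))"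
proof (intro set_eqI iffI)
  fix a assume a: "a \<in> monomials (Suc n) l"
  have s: "(\<Sum>i\<le>Suc n. a i) = (\<Sum>i\<le>n. a i) + a (Suc n)" by simp
  have "a(Suc n := 0) \<in> monomials n (l - a (Suc n))"
    using a s by (auto simp: monomials_def)
  moreover have "a = (a(Suc n := 0))(Suc n := a (Suc n))" by simp
  moreover have "a (Suc n) \<le> l" using a s by (auto simp: monomials_def)
  ultimately show "a \<in> (\<Union>t\<le>l. (\<lambda>a. a(Suc n := t)) ` monomials n (l - t))" by blast
next
  fix a assume "a \<in> (\<Union>t\<le>l. (\<lambda>a. a(Suc n := t)) ` monomials n (l - t))"
  then obtain t b where t: "t \<le> l" and b: "b \<in> monomials n (l - t)" and ab: "a = b(Suc n := t)"
    by auto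
  have "(\<Sum>i\<le>n. a i) = (\<Sum>i\<le>n. b i)" unfolding ab by (rule sum.cong) auto
  then show "a \<in> monomials (Suc n) l" using b t ab by (auto simp: monomials_def)
qed

lemma card_monomials: "card (monomials n l) = (n + l) choose l"
proof (induction n arbitrary: l)
  case 0
  then show ?case by (simp add: monomials_0)
next
  case (Suc n)
  have inj: "inj_on (\<lambda>a. a(Suc n := t)) (monomials n s)" for t s
  proof (rule inj_onI)
    fix a b assume "a \<in> monomials n s" "b \<in> monomials n s" "a(Suc n := t) = b(Suc n := t)"
    then show "a = b"
      by (auto simp: monomials_def fun_eq_iff) (metis fun_upd_other lessI)
  qed
  have "card (monomials (Suc n) l) = (\<Sum>t\<le>l. card ((\<lambda>a. a(Suc n := t)) ` monomials n (l - t)))"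
    unfolding monomials_Suc
    by (rule card_UN_disjoint) (auto simp: finite_monomials fun_eq_iff, metis fun_upd_same)
  also have "\<dots> = (\<Sum>t\<le>l. (n + (l - t)) choose (l - t))"
    by (simp add: card_image[OF inj] Suc.IH)
  also have "\<dots> = (\<Sum>s\<le>l. (n + s) choose s)"
    by (rule sum.reindex_bij_witness[of _ "\<lambda>s. l - s" "\<lambda>s. l - s"]) auto
  also have "\<dots> = (Suc n + l) choose l"
    by (simp add: sum_choose_lower)
  finally show ?case .
qed

lemma hom_poly_eval_eq: "hom_poly_eval n d c p = (\<Sum>a\<in>monomials n d. c a * monomial n a p)"
  by (simp add: hom_poly_eval_def monomial_def)

lemma forms_iff: "f \<in> forms n d \<longleftrightarrow> (\<exists>c. f = (\<lambda>p. \<Sum>a\<in>monomials n d. c a * monomial n a p))"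
  unfolding forms_def by (auto simp: hom_poly_eval_eq[abs_def])

lemma formsE:
  assumes "f \<in> forms n d"
  obtains c where "f = (\<lambda>p. \<Sum>a\<in>monomials n d. c a * monomial n a p)"
  using assms by (auto simp: forms_iff)

lemma formsI: "(\<lambda>p. \<Sum>a\<in>monomials n d. c a * monomial n a p) \<in> forms n d"
  by (auto simp: forms_iff)

lemma monomial_in_forms: "a \<in> monomials n d \<Longrightarrow> monomial n a \<in> forms n d"
  using formsI[of "\<lambda>b. if b = a then 1 else 0" n d] finite_monomials
  by (simp add: if_distrib[of "\<lambda>x. x * _"] sum.delta' cong: if_cong)

lemma forms_add:
  assumes "f \<in> forms n d" "g \<in> forms n d"
  shows "(\<lambda>p. f p + g p) \<in> forms n d"
proof -
  obtain c c' where f: "f = (\<lambda>p. \<Sum>a\<in>monomials n d. c a * monomial n a p)"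
    and g: "g = (\<lambda>p. \<Sum>a\<in>monomials n d. c' a * monomial n a p)"
    using assms by (metis formsE)
  show ?thesis
    using formsI[of "\<lambda>a. c a + c' a" n d] by (simp add: f g distrib_right sum.distrib)
qed

lemma forms_cmult:
  assumes "f \<in> forms n d"
  shows "(\<lambda>p. k * f p) \<in> forms n d"
proof -
  obtain c where f: "f = (\<lambda>p. \<Sum>a\<in>monomials n d. c a * monomial n a p)"
    using assms by (rule formsE)
  show ?thesis
    using formsI[of "\<lambda>a. k * c a" n d] by (simp add: f sum_distrib_left mult.assoc)
qed

lemma forms_diff: "f \<in> forms n d \<Longrightarrow> g \<in> forms n d \<Longrightarrow> (\<lambda>p. f p - g p) \<in> forms n d"
  using forms_add[of f n d "\<lambda>p. (-1) * g p"] forms_cmult[of g n d "-1"] by simp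

lemma forms_sum:
  "(\<And>x. x \<in> A \<Longrightarrow> f x \<in> forms n d) \<Longrightarrow> (\<lambda>p. \<Sum>x\<in>A. f x p) \<in> forms n d"
proof (induction A rule: infinite_finite_induct)
  case (infinite A)
  then show ?case using formsI[of "\<lambda>_. 0" n d] by simp
next
  case empty
  then show ?case using formsI[of "\<lambda>_. 0" n d] by simp
next
  case (insert a A)
  then show ?case using forms_add[of "f a" n d "\<lambda>p. \<Sum>x\<in>A. f x p"] by simp
qed

lemma forms_mult: "f \<in> forms n d1 \<Longrightarrow> g \<in> forms n d2 \<Longrightarrow> (\<lambda>p. f p * g p) \<in> forms n (d1 + d2)"
proof (elim formsE)
  fix c c'
  assume f: "f = (\<lambda>p. \<Sum>a\<in>monomials n d1. c a * monomial n a p)"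
    and g: "g = (\<lambda>p. \<Sum>b\<in>monomials n d2. c' b * monomial n b p)"
  have "(\<lambda>p. f p * g p) = (\<lambda>p. \<Sum>a\<in>monomials n d1. \<Sum>b\<in>monomials n d2.
      (c a * c' b) * monomial n (\<lambda>i. a i + b i) p)"
    unfolding f g
    by (simp add: sum_distrib_left sum_distrib_right monomial_mult[symmetric] algebra_simps)
  also have "\<dots> \<in> forms n (d1 + d2)"
    by (intro forms_sum forms_cmult monomial_in_forms) (simp add: monomials_def sum.distrib)
  finally show ?thesis .
qed

lemma forms_one: "(\<lambda>_. 1) \<in> (forms n 0 :: ((nat \<Rightarrow> 'a::field) \<Rightarrow> 'a) set)"
proof -
  have "monomial n (\<lambda>_. 0) = (\<lambda>_. 1::'a)"
    by (simp add: monomial_def fun_eq_iff)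
  then show ?thesis
    using monomial_in_forms[of "\<lambda>_. 0" n 0, where 'a='a] by (simp add: monomials_def)
qed

lemma forms_power: "f \<in> forms n d \<Longrightarrow> (\<lambda>p. f p ^ r) \<in> forms n (r * d)"
  by (induction r) (simp_all add: forms_one forms_mult)

lemma forms_prod:
  "finite I \<Longrightarrow> (\<And>i. i \<in> I \<Longrightarrow> f i \<in> forms n d) \<Longrightarrow> (\<lambda>p. \<Prod>i\<in>I. f i p) \<in> forms n (card I * d)"
  by (induction I rule: finite_induct) (simp_all add: forms_one forms_mult)

lemma forms_coordinate:
  assumes "i \<le> n"
  shows "(\<lambda>p::nat \<Rightarrow> 'a::field. p i) \<in> forms n 1"
proof -
  have "monomial n (\<lambda>j. if j = i then 1 else 0) = (\<lambda>p::nat \<Rightarrow> 'a. p i)"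
    using assms by (simp add: monomial_def fun_eq_iff if_distrib[of "\<lambda>e. _ ^ e"] prod.delta' cong: if_cong)
  then show ?thesis
    using monomial_in_forms[of "\<lambda>j. if j = i then 1 else 0" n 1, where 'a='a] assms
    by (simp add: monomials_def)
qed

lemma forms_orthogonal:
  fixes f g :: "(nat \<Rightarrow> 'a::{finite,field}) \<Rightarrow> 'a"
  assumes n: "n \<ge> 1" and d: "d1 + d2 = n * (CARD('a) - 1)"
    and "f \<in> forms n d1" "g \<in> forms n d2"
  shows "(\<Sum>p\<in>proj_points n. f p * g p) = 0"
proof -
  have "(\<lambda>p. f p * g p) \<in> forms n (n * (CARD('a) - 1))"
    using forms_mult[OF assms(3,4)] d by simp
  then obtain c where fg: "(\<lambda>p. f p * g p)
      = (\<lambda>p. \<Sum>a\<in>monomials n (n * (CARD('a) - 1)). c a * monomial n a p)"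
    by (elim formsE)
  have "(\<Sum>p\<in>proj_points n. f p * g p)
      = (\<Sum>a\<in>monomials n (n * (CARD('a) - 1)). c a * proj_sum n a)"
    by (simp add: fg[THEN fun_cong] proj_sum_def sum_distrib_left sum.swap[of _ "proj_points n"])
  also have "\<dots> = 0"
    using proj_sum_top_degree[OF n, where 'a='a] by (simp add: monomials_def)
  finally show ?thesis .
qed

lemma sum_monomial_mult_low_degree:
  assumes "a \<in> monomials n l" "b \<in> monomials n l" "2 * l < CARD('a::{finite,field}) - 1"
  shows "(\<Sum>p\<in>proj_points n. monomial n a p * monomial n b p)
    = (if \<forall>i<n. a i + b i = 0 then 1 else (0::'a))"
proof -
  have "(\<Sum>i\<le>n. a i + b i) = 2 * l" using assms by (simp add: monomials_def sum.distrib)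
  then show ?thesis
    using proj_sum_low_degree[of "\<lambda>i. a i + b i" n, where 'a='a] assms(3)
    by (simp add: monomial_mult proj_sum_def)
qed

section \<open>Monomial words of low degree\<close>

abbreviation monomial_word :: "nat \<Rightarrow> (nat \<Rightarrow> nat) \<Rightarrow> (nat \<Rightarrow> 'a::field) \<Rightarrow> 'a" where
  "monomial_word n a \<equiv> word_of n (monomial n a)"

text \<open>On a point whose leading coordinate is \<open>x\<^sub>j\<^sub>0\<close> with \<open>j\<^sub>0 \<le> z\<close>, the \<open>j\<^sub>0\<close>-th summand
  is \<open>1\<close>: the earlier ones contain a power of \<open>x\<^sub>j = 0\<close>, the later ones the factor
  \<open>x\<^sub>z\<^sup>q\<^sup>-\<^sup>1 - x\<^sub>j\<^sub>0\<^sup>q\<^sup>-\<^sup>1 = 0\<close>.\<close>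

definition coordinate_unit_form :: "nat \<Rightarrow> nat \<Rightarrow> (nat \<Rightarrow> 'a::{finite,field}) \<Rightarrow> 'a" where
  "coordinate_unit_form z d p = (\<Sum>j\<le>z. p j ^ (d - j * (CARD('a) - 1))
      * (\<Prod>i<j. p z ^ (CARD('a) - 1) - p i ^ (CARD('a) - 1)))"

lemma coordinate_unit_form_in_forms:
  assumes z: "z \<le> n" and d: "z * (CARD('a::{finite,field}) - 1) < d"
  shows "(coordinate_unit_form z d :: (nat \<Rightarrow> 'a) \<Rightarrow> 'a) \<in> forms n d"
  unfolding coordinate_unit_form_def
proof (intro forms_sum)
  let ?q = "CARD('a)"
  fix j assume "j \<in> {..z}"
  then have "j * (?q - 1) < d"
    using d by (meson atMost_iff le_less_trans mult_le_mono1)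
  then have "(d - j * (?q - 1)) * 1 + card {..<j} * ((?q - 1) * 1) = d"
    using le_add_diff_inverse2[of "j * (?q - 1)" d] by (simp add: mult.commute)
  moreover have "(\<lambda>p. p j ^ (d - j * (?q - 1)) * (\<Prod>i<j. p z ^ (?q - 1) - p i ^ (?q - 1)))
      \<in> (forms n ((d - j * (?q - 1)) * 1 + card {..<j} * ((?q - 1) * 1)) :: ((nat \<Rightarrow> 'a) \<Rightarrow> 'a) set)"
    using \<open>j \<in> {..z}\<close> z by (intro forms_mult forms_power forms_prod forms_diff forms_coordinate) auto
  ultimately show "(\<lambda>p. p j ^ (d - j * (?q - 1)) * (\<Prod>i<j. p z ^ (?q - 1) - p i ^ (?q - 1)))
      \<in> (forms n d :: ((nat \<Rightarrow> 'a) \<Rightarrow> 'a) set)" by simp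
qed

lemma coordinate_unit_form_eq_1:
  fixes p :: "nat \<Rightarrow> 'a::{finite,field}"
  assumes d: "z * (CARD('a) - 1) < d" and p: "p \<in> proj_points n" "p z \<noteq> 0"
  shows "coordinate_unit_form z d p = 1"
proof -
  let ?q = "CARD('a)"
  obtain j0 where "j0 \<le> n" "p \<in> stratum n j0" using p(1) by (rule proj_pointsE)
  then have pj0: "p j0 = 1" and below: "\<forall>i<j0. p i = 0" by (auto simp: stratum_def)
  have "j0 \<le> z" using below p(2) by (meson not_le)
  have pzq: "p z ^ (?q - 1) = 1" using p(2) power_card_minus_one[of "p z"] by simp
  have "p j ^ (d - j * (?q - 1)) * (\<Prod>i<j. p z ^ (?q - 1) - p i ^ (?q - 1)) = (if j = j0 then 1 else 0)"
    if "j \<le> z" for j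
  proof (cases j j0 rule: linorder_cases)
    case less
    moreover have "d - j * (?q - 1) \<noteq> 0"
      using d that by (metis diff_is_0_eq leD le_trans mult_le_mono1)
    ultimately show ?thesis using below by (simp add: power_0_left)
  next
    case equal
    then show ?thesis
      using pj0 below pzq two_le_card_field[where 'a='a] by (simp add: power_0_left)
  next
    case greater
    then have "(\<Prod>i<j. p z ^ (?q - 1) - p i ^ (?q - 1)) = 0"
      using pzq pj0 by (intro prod_zero) (auto intro!: bexI[of _ j0])
    then show ?thesis using greater by simp
  qed
  then show ?thesis using \<open>j0 \<le> z\<close> by (simp add: coordinate_unit_form_def)
qed

text \<open>A monomial of degree \<open>l\<close> involving some \<open>x\<^sub>z\<close> with \<open>z < n\<close> agrees on the projective
  space with its product by \<open>coordinate_unit_form z (n(q - 1) - 2l)\<close>.\<close>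

lemma monomial_word_in_PRM_complement:
  assumes l: "2 * l < CARD('a::{finite,field}) - 1"
    and b: "b \<in> monomials n l" and z: "z < n" "0 < b z"
  shows "(monomial_word n b :: (nat \<Rightarrow> 'a) \<Rightarrow> 'a) \<in> PRM n (n * (CARD('a) - 1) - l)"
proof -
  let ?q = "CARD('a)"
  let ?d = "n * (?q - 1) - 2 * l"
  have "z * (?q - 1) + (?q - 1) \<le> n * (?q - 1)"
    using z(1) mult_le_mono1[of "Suc z" n "?q - 1"] by simp
  then have "z * (?q - 1) < ?d" using l by linarith
  define E :: "(nat \<Rightarrow> 'a) \<Rightarrow> 'a" where "E = coordinate_unit_form z ?d"
  have "E \<in> forms n ?d"
    unfolding E_def using z(1) \<open>z * (?q - 1) < ?d\<close> by (intro coordinate_unit_form_in_forms) auto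
  then have "(\<lambda>p. monomial n b p * E p) \<in> forms n (l + ?d)"
    by (intro forms_mult monomial_in_forms b)
  moreover have "l + ?d = n * (?q - 1) - l" using \<open>z * (?q - 1) < ?d\<close> by linarith
  moreover have "monomial_word n b = word_of n (\<lambda>p. monomial n b p * E p)"
  proof
    fix p :: "nat \<Rightarrow> 'a"
    show "monomial_word n b p = word_of n (\<lambda>p. monomial n b p * E p) p"
    proof (cases "p \<in> proj_points n \<and> p z \<noteq> 0")
      case True
      then have "E p = 1"
        unfolding E_def by (intro coordinate_unit_form_eq_1[OF \<open>z * (?q - 1) < ?d\<close>]) auto
      then show ?thesis by (simp add: word_of_def)
    next
      case False
      moreover have "monomial n b p = 0" if "p z = 0"
        unfolding monomial_def using that z by (intro prod_zero) (auto intro!: bexI[of _ z])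
      ultimately show ?thesis by (auto simp: word_of_def)
    qed
  qed
  ultimately show ?thesis unfolding PRM_eq_image_forms by auto
qed

definition dual_word :: "nat \<Rightarrow> (nat \<Rightarrow> nat) \<Rightarrow> (nat \<Rightarrow> 'a::{finite,field}) \<Rightarrow> 'a" where
  "dual_word n b = (\<lambda>p. if p \<in> stratum n 0 then \<Prod>i\<in>{0<..n}. p i ^ (CARD('a) - 1 - b i) else 0)"

lemma power_sum_complement:
  assumes "a < CARD('a::{finite,field}) - 1" "b < CARD('a) - 1"
  shows "power_sum (a + (CARD('a) - 1 - b)) = (if a = b then -1 else (0::'a))"
proof -
  let ?e = "a + (CARD('a) - 1 - b)"
  have "(CARD('a) - 1) dvd ?e \<longleftrightarrow> a = b"
  proof
    assume "(CARD('a) - 1) dvd ?e"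
    then obtain m where m: "?e = (CARD('a) - 1) * m" by blast
    moreover have "0 < ?e" "?e < (CARD('a) - 1) * 2" using assms by auto
    ultimately have "m = 1" by (auto simp: mult_less_cancel1 less_2_cases_iff)
    then show "a = b" using m assms by simp
  qed (use assms in simp)
  then show ?thesis using assms by (auto simp: power_sum_eq)
qed

lemma dot_monomial_word_dual_word:
  assumes "\<forall>i\<in>{0<..n}. a i < CARD('a::{finite,field}) - 1 \<and> b i < CARD('a) - 1"
  shows "dot n (monomial_word n a) (dual_word n b :: _ \<Rightarrow> 'a)
     = (if \<forall>i\<in>{0<..n}. a i = b i then (-1) ^ n else 0)"
proof -
  let ?q = "CARD('a)"
  have "dot n (monomial_word n a) (dual_word n b :: _ \<Rightarrow> 'a)
      = (\<Sum>p\<in>proj_points n. monomial n a p * dual_word n b p)"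
    unfolding dot_def word_of_def by (rule sum.cong) auto
  also have "\<dots> = (\<Sum>p\<in>stratum n 0. monomial n a p * dual_word n b p)"
    using stratum_0_subset_proj_points[of n]
    by (intro sum.mono_neutral_right) (auto simp: finite_proj_points dual_word_def)
  also have "\<dots> = (\<Sum>p\<in>stratum n 0. \<Prod>i\<in>{0<..n}. (p i :: 'a) ^ (a i + (?q - 1 - b i)))"
    by (intro sum.cong)
      (simp_all add: dual_word_def monomial_stratum_0 prod.distrib[symmetric] power_add)
  also have "\<dots> = (\<Prod>i\<in>{0<..n}. power_sum (a i + (?q - 1 - b i)))"
    unfolding stratum_eq_box[OF le0] power_sum_def by (rule sum_prod_box) auto
  also have "\<dots> = (\<Prod>i\<in>{0<..n}. if a i = b i then -1 else 0)"
  proof (intro prod.cong refl)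
    fix i assume "i \<in> {0<..n}"
    then show "power_sum (a i + (?q - 1 - b i)) = (if a i = b i then -1 else (0::'a))"
      using assms by (intro power_sum_complement) auto
  qed
  also have "\<dots> = (if \<forall>i\<in>{0<..n}. a i = b i then (-1) ^ n else 0)"
    by (auto intro: prod_zero)
  finally show ?thesis .
qed

lemma dot_monomial_word_dual_word_monomials:
  assumes "a \<in> monomials n l" "b \<in> monomials n l" "l < CARD('a::{finite,field}) - 1"
  shows "dot n (monomial_word n a) (dual_word n b :: _ \<Rightarrow> 'a) = (if a = b then (-1) ^ n else 0)"
proof -
  have "\<forall>i\<in>{0<..n}. a i < CARD('a) - 1 \<and> b i < CARD('a) - 1"
    using monomials_le_degree[OF assms(1)] monomials_le_degree[OF assms(2)] assms(3)
    by (meson le_less_trans)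
  then show ?thesis
    using dot_monomial_word_dual_word[of n a b, where 'a='a] monomials_eqI[OF assms(1,2)] by auto
qed

interpretation word_space: vector_space "\<lambda>(c::'a::field) (v::(nat \<Rightarrow> 'a) \<Rightarrow> 'a). (\<lambda>p. c * v p)"
  by unfold_locales (auto simp: fun_eq_iff algebra_simps)

lemma dot_sum_left: "dot n (\<Sum>x\<in>A. (\<lambda>p. u x * w x p)) v = (\<Sum>x\<in>A. u x * dot n (w x) v)"
  unfolding dot_def sum_fun_apply
  by (simp add: sum_distrib_right sum_distrib_left sum.swap[of _ A] mult.assoc)

lemma dot_commute: "dot n v w = dot n w v"
  unfolding dot_def by (simp add: mult.commute)

lemma inj_on_monomial_word:
  assumes "l < CARD('a::{finite,field}) - 1"
  shows "inj_on (\<lambda>a. monomial_word n a :: (nat \<Rightarrow> 'a) \<Rightarrow> 'a) (monomials n l)"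
proof (rule inj_onI)
  fix a b assume a: "a \<in> monomials n l" and b: "b \<in> monomials n l"
    and "(monomial_word n a :: (nat \<Rightarrow> 'a) \<Rightarrow> 'a) = monomial_word n b"
  then have "dot n (monomial_word n a) (dual_word n b :: _ \<Rightarrow> 'a)
      = dot n (monomial_word n b) (dual_word n b)" by simp
  then show "a = b"
    using dot_monomial_word_dual_word_monomials[OF a b assms]
      dot_monomial_word_dual_word_monomials[OF b b assms] by (auto split: if_splits)
qed

lemma monomial_words_lincomb_eq_0_imp:
  fixes v :: "(nat \<Rightarrow> 'a::{finite,field}) \<Rightarrow> 'a"
  assumes l: "l < CARD('a) - 1"
    and T: "finite T" "T \<subseteq> (\<lambda>a. monomial_word n a) ` monomials n l"
    and zero: "(\<Sum>w\<in>T. (\<lambda>p. u w * w p)) = 0" and v: "v \<in> T"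
  shows "u v = 0"
proof -
  obtain b where b: "b \<in> monomials n l" "v = monomial_word n b" using T(2) v by blast
  have "0 = dot n (\<Sum>w\<in>T. (\<lambda>p. u w * w p)) (dual_word n b)"
    unfolding zero by (simp add: dot_def)
  also have "\<dots> = (\<Sum>w\<in>T. u w * dot n w (dual_word n b))"
    by (rule dot_sum_left[where w = "\<lambda>w. w"])
  also have "\<dots> = (\<Sum>w\<in>T. if w = v then u v * (-1) ^ n else 0)"
  proof (rule sum.cong[OF refl])
    fix w assume "w \<in> T"
    then obtain a where a: "a \<in> monomials n l" "w = monomial_word n a" using T(2) by blast
    have "w = v \<longleftrightarrow> a = b"
      using inj_onD[OF inj_on_monomial_word[OF l] _ a(1) b(1)] a(2) b(2) by auto
    then show "u w * dot n w (dual_word n b) = (if w = v then u v * (-1) ^ n else 0)"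
      using dot_monomial_word_dual_word_monomials[OF a(1) b(1) l] a(2) by auto
  qed
  also have "\<dots> = u v * (-1) ^ n"
    using T(1) v by simp
  finally show "u v = 0" by simp
qed

lemma independent_monomial_words:
  assumes "l < CARD('a::{finite,field}) - 1"
  shows "word_space.independent ((\<lambda>a. monomial_word n a :: (nat \<Rightarrow> 'a) \<Rightarrow> 'a) ` monomials n l)"
  unfolding word_space.independent_explicit_module
  using monomial_words_lincomb_eq_0_imp[OF assms] by blast

lemma monomial_word_in_PRM: "a \<in> monomials n d \<Longrightarrow> monomial_word n a \<in> PRM n d"
  unfolding PRM_eq_image_forms by (intro imageI monomial_in_forms)

lemma PRM_subset_span_monomial_words:
  "PRM n d \<subseteq> word_space.span ((\<lambda>a. monomial_word n a :: (nat \<Rightarrow> 'a::field) \<Rightarrow> 'a) ` monomials n d)"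
proof
  fix v :: "(nat \<Rightarrow> 'a) \<Rightarrow> 'a" assume "v \<in> PRM n d"
  then obtain c where "v = (\<Sum>a\<in>monomials n d. (\<lambda>p. c a * monomial_word n a p))"
    unfolding PRM_eq_image_forms by (auto elim!: formsE simp: word_of_sum)
  also have "\<dots> \<in> word_space.span ((\<lambda>a. monomial_word n a) ` monomials n d)"
    by (intro word_space.span_sum word_space.span_scale[where c = "c _", simplified]
        word_space.span_base) auto
  finally show "v \<in> word_space.span ((\<lambda>a. monomial_word n a) ` monomials n d)" .
qed

lemma code_dim_PRM:
  assumes "l < CARD('a::{finite,field}) - 1"
  shows "code_dim (PRM n l :: ((nat \<Rightarrow> 'a) \<Rightarrow> 'a) set) = (n + l) choose l"
proof -
  have "word_space.dim (PRM n l :: ((nat \<Rightarrow> 'a) \<Rightarrow> 'a) set) = card (monomials n l)"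
  proof (rule word_space.dim_unique)
    show "(\<lambda>a. monomial_word n a) ` monomials n l \<subseteq> (PRM n l :: ((nat \<Rightarrow> 'a) \<Rightarrow> 'a) set)"
      by (auto intro: monomial_word_in_PRM)
    show "card ((\<lambda>a. monomial_word n a :: (nat \<Rightarrow> 'a) \<Rightarrow> 'a) ` monomials n l) = card (monomials n l)"
      by (rule card_image[OF inj_on_monomial_word[OF assms]])
  qed (rule PRM_subset_span_monomial_words, rule independent_monomial_words[OF assms])
  then show ?thesis by (simp add: code_dim_def card_monomials)
qed

section \<open>Words orthogonal to \<open>C\<^sub>k\<close>\<close>

definition indicator_coeff :: "nat \<Rightarrow> 'a::{finite,field} \<Rightarrow> 'a" where
  "indicator_coeff t a = (if t = 0 then 1 - a ^ (CARD('a) - 1) else - (a ^ (CARD('a) - 1 - t)))"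

text \<open>\<open>(y - a) * (\<Sum>t<q. a\<^sup>q\<^sup>-\<^sup>1\<^sup>-\<^sup>t * y\<^sup>t) = y\<^sup>q - a\<^sup>q = y - a\<close>.\<close>

lemma sum_power_geometric_card:
  "(\<Sum>t<CARD('a). a ^ (CARD('a) - Suc t) * y ^ t) = (if y = a then 0 else (1::'a::{finite,field}))"
proof -
  let ?q = "CARD('a)"
  let ?S = "(\<Sum>t<?q. a ^ (?q - Suc t) * y ^ t)"
  have geom: "y - a = (y - a) * ?S"
    using power_diff_sumr2[of y ?q a] by (simp add: power_card_field)
  show ?thesis
  proof (cases "y = a")
    case True
    have "?S = (\<Sum>t<?q. a ^ (?q - 1))"
    proof (rule sum.cong[OF refl])
      fix t assume "t \<in> {..<?q}"
      then have "?q - Suc t + t = ?q - 1" by auto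
      then show "a ^ (?q - Suc t) * y ^ t = a ^ (?q - 1)" using True by (metis power_add)
    qed
    then show ?thesis using True by (simp add: of_nat_card_field)
  next
    case False
    then have "?S = 1" using geom by simp
    then show ?thesis using False by simp
  qed
qed

lemma indicator_eq_sum_power:
  "(if y = a then 1 else 0) = (\<Sum>t<CARD('a). indicator_coeff t a * y ^ t :: 'a::{finite,field})"
proof -
  have "(\<Sum>t<CARD('a). indicator_coeff t a * y ^ t)
      = (\<Sum>t<CARD('a). (if t = 0 then 1 else 0) - a ^ (CARD('a) - Suc t) * y ^ t)"
    by (rule sum.cong) (auto simp: indicator_coeff_def)
  also have "\<dots> = 1 - (\<Sum>t<CARD('a). a ^ (CARD('a) - Suc t) * y ^ t)"
    using two_le_card_field[where 'a='a] by (simp add: sum_subtractf)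
  finally show ?thesis by (simp add: sum_power_geometric_card)
qed

lemma prod_indicator:
  "finite A \<Longrightarrow> (\<Prod>i\<in>A. if Q i then 1 else 0) = (if \<forall>i\<in>A. Q i then 1 else (0::'a::comm_semiring_1))"
  by (induction A rule: finite_induct) auto

definition interpolation_coeff :: "nat \<Rightarrow> ((nat \<Rightarrow> 'a) \<Rightarrow> 'a) \<Rightarrow> (nat \<Rightarrow> nat) \<Rightarrow> 'a::{finite,field}" where
  "interpolation_coeff n v e = (\<Sum>P\<in>stratum n 0. v P * (\<Prod>i\<in>{0<..n}. indicator_coeff (e i) (P i)))"

lemma affine_interpolation:
  fixes v :: "(nat \<Rightarrow> 'a::{finite,field}) \<Rightarrow> 'a"
  assumes y: "y \<in> stratum n 0"
  shows "v y = (\<Sum>e\<in>box {0<..n} {..<CARD('a)} (\<lambda>_. 0).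
    interpolation_coeff n v e * (\<Prod>i\<in>{0<..n}. y i ^ e i))"
proof -
  let ?E = "box {0<..n} {..<CARD('a)} (\<lambda>_. 0)"
  have "v y = (\<Sum>P\<in>stratum n 0. v P * (if y = P then 1 else 0))"
    using y finite_stratum[of n 0, where 'a='a]
    by (simp add: if_distrib[of "\<lambda>x. _ * x"] cong: if_cong)
  also have "\<dots> = (\<Sum>P\<in>stratum n 0. v P * (\<Sum>e\<in>?E.
      (\<Prod>i\<in>{0<..n}. indicator_coeff (e i) (P i)) * (\<Prod>i\<in>{0<..n}. y i ^ e i)))"
  proof (rule sum.cong[OF refl])
    fix P :: "nat \<Rightarrow> 'a" assume P: "P \<in> stratum n 0"
    have "y = P \<longleftrightarrow> (\<forall>i\<in>{0<..n}. y i = P i)"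
      using stratum_eqI[OF y P] by auto
    then have "(if y = P then 1 else 0) = (\<Prod>i\<in>{0<..n}. \<Sum>t<CARD('a). indicator_coeff t (P i) * y i ^ t)"
      by (simp add: prod_indicator indicator_eq_sum_power[symmetric])
    also have "\<dots> = (\<Sum>e\<in>?E. \<Prod>i\<in>{0<..n}. indicator_coeff (e i) (P i) * y i ^ e i)"
      by (rule sum_prod_box[symmetric]) auto
    finally show "v P * (if y = P then 1 else 0) = v P * (\<Sum>e\<in>?E.
        (\<Prod>i\<in>{0<..n}. indicator_coeff (e i) (P i)) * (\<Prod>i\<in>{0<..n}. y i ^ e i))"
      by (simp add: prod.distrib)
  qed
  also have "\<dots> = (\<Sum>e\<in>?E. interpolation_coeff n v e * (\<Prod>i\<in>{0<..n}. y i ^ e i))"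
    unfolding interpolation_coeff_def
    by (simp add: sum_distrib_left sum_distrib_right sum.swap[of _ "stratum n 0"] mult.assoc)
  finally show ?thesis .
qed

text \<open>The sum is the product of \<open>v\<close> with the word of \<open>x\<^sub>0\<^sup>k\<^sup>-\<^sup>|\<^sup>\<sigma>\<^sup>| x\<^sup>\<sigma> \<in> C\<^sub>k\<close>.\<close>

lemma dual_annihilates_chart_monomials:
  fixes v :: "(nat \<Rightarrow> 'a::{finite,field}) \<Rightarrow> 'a"
  assumes v: "\<forall>w\<in>PRM n k. dot n v w = 0" and deg: "(\<Sum>i\<in>{0<..n}. \<sigma> i) < k"
  shows "(\<Sum>P\<in>stratum n 0. v P * (\<Prod>i\<in>{0<..n}. P i ^ \<sigma> i)) = 0"
proof -
  define a where "a i = (if i = 0 then k - (\<Sum>i\<in>{0<..n}. \<sigma> i) else if i \<le> n then \<sigma> i else 0)" for i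
  have "(\<Sum>i\<in>{0<..n}. a i) = (\<Sum>i\<in>{0<..n}. \<sigma> i)"
    by (rule sum.cong) (auto simp: a_def)
  then have "a \<in> monomials n k"
    using sum_atMost_split_at[of 0 n a] deg by (simp add: monomials_def a_def)
  have "(\<Sum>P\<in>stratum n 0. v P * (\<Prod>i\<in>{0<..n}. P i ^ \<sigma> i))
      = (\<Sum>p\<in>stratum n 0. v p * monomial n a p)"
    by (rule sum.cong) (auto simp: monomial_stratum_0 a_def intro!: prod.cong)
  also have "\<dots> = dot n v (monomial_word n a)"
  proof -
    have "monomial n a p = 0" if "p \<in> proj_points n" "p \<notin> stratum n 0" for p :: "nat \<Rightarrow> 'a"
      using proj_points_not_stratum_0[OF that] deg unfolding monomial_def
      by (intro prod_zero) (auto simp: a_def intro!: bexI[of _ 0])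
    then show ?thesis
      unfolding dot_word_of using stratum_0_subset_proj_points[of n]
      by (intro sum.mono_neutral_left) (auto simp: finite_proj_points)
  qed
  also have "\<dots> = 0"
    using v monomial_word_in_PRM[OF \<open>a \<in> monomials n k\<close>] by blast
  finally show ?thesis .
qed

text \<open>Each factor \<open>indicator_coeff (e i) (P i)\<close> is a polynomial in \<open>P i\<close> of degree \<open>q - 1 - e i\<close>,
  so expanding the product leaves chart monomials of degree \<open>< k\<close>; the induction multiplies in
  one factor at a time.\<close>

lemma dual_annihilates_indicator_products:
  fixes v :: "(nat \<Rightarrow> 'a::{finite,field}) \<Rightarrow> 'a"
  assumes v: "\<forall>w\<in>PRM n k. dot n v w = 0" and I: "finite I" "I \<subseteq> {0<..n}"
    and deg: "(\<Sum>i\<in>{0<..n}. \<sigma> i) + (\<Sum>i\<in>I. CARD('a) - 1 - e i) < k"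
  shows "(\<Sum>P\<in>stratum n 0. v P * ((\<Prod>i\<in>I. indicator_coeff (e i) (P i)) * (\<Prod>i\<in>{0<..n}. P i ^ \<sigma> i))) = 0"
  using I deg
proof (induction I arbitrary: \<sigma> rule: finite_induct)
  case empty
  then show ?case using dual_annihilates_chart_monomials[OF v, of \<sigma>] by simp
next
  case (insert a I)
  let ?q = "CARD('a)"
  let ?G = "\<lambda>P. \<Prod>i\<in>I. indicator_coeff (e i) (P i)"
  define s where "s = ?q - 1 - e a"
  define \<sigma>' where "\<sigma>' i = \<sigma> i + (if i = a then s else 0)" for i
  have a: "a \<in> {0<..n}" and "I \<subseteq> {0<..n}" using insert.prems by auto
  have shift: "P a ^ s * (\<Prod>i\<in>{0<..n}. P i ^ \<sigma> i) = (\<Prod>i\<in>{0<..n}. P i ^ \<sigma>' i)" for P :: "nat \<Rightarrow> 'a"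
    using a by (simp add: \<sigma>'_def power_add prod.distrib if_distrib[of "\<lambda>e. P _ ^ e"] cong: if_cong)
  have "(\<Sum>i\<in>{0<..n}. \<sigma>' i) = (\<Sum>i\<in>{0<..n}. \<sigma> i) + s"
    using a by (simp add: \<sigma>'_def sum.distrib)
  then have IH: "(\<Sum>P\<in>stratum n 0. v P * (?G P * (\<Prod>i\<in>{0<..n}. P i ^ \<tau> i))) = 0"
    if "\<tau> = \<sigma> \<or> \<tau> = \<sigma>'" for \<tau>
    using that insert.prems(2) insert.hyps \<open>I \<subseteq> {0<..n}\<close>
    by (auto intro!: insert.IH simp: s_def add.assoc)
  define c :: 'a where "c = (if e a = 0 then 1 else 0)"
  have ind: "indicator_coeff (e a) (P a) = c - P a ^ s" for P :: "nat \<Rightarrow> 'a"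
    by (simp add: indicator_coeff_def s_def c_def)
  have prod_insert: "(\<Prod>i\<in>insert a I. indicator_coeff (e i) (P i)) = (c - P a ^ s) * ?G P" for P
    using insert.hyps by (simp add: ind)
  have "v P * ((\<Prod>i\<in>insert a I. indicator_coeff (e i) (P i)) * (\<Prod>i\<in>{0<..n}. P i ^ \<sigma> i))
      = c * (v P * (?G P * (\<Prod>i\<in>{0<..n}. P i ^ \<sigma> i)))
        - v P * (?G P * (P a ^ s * (\<Prod>i\<in>{0<..n}. P i ^ \<sigma> i)))" for P
    by (simp add: prod_insert algebra_simps)
  then have "(\<Sum>P\<in>stratum n 0. v P * ((\<Prod>i\<in>insert a I. indicator_coeff (e i) (P i)) * (\<Prod>i\<in>{0<..n}. P i ^ \<sigma> i)))
      = c * (\<Sum>P\<in>stratum n 0. v P * (?G P * (\<Prod>i\<in>{0<..n}. P i ^ \<sigma> i)))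
        - (\<Sum>P\<in>stratum n 0. v P * (?G P * (\<Prod>i\<in>{0<..n}. P i ^ \<sigma>' i)))"
    by (simp add: shift sum_subtractf sum_distrib_left)
  then show ?case using IH by simp
qed

lemma interpolation_coeff_eq_0:
  fixes v :: "(nat \<Rightarrow> 'a::{finite,field}) \<Rightarrow> 'a"
  assumes v: "\<forall>w\<in>PRM n (n * (CARD('a) - 1) - l). dot n v w = 0"
    and e: "e \<in> box {0<..n} {..<CARD('a)} (\<lambda>_. 0)" and big: "l < (\<Sum>i\<in>{0<..n}. e i)"
  shows "interpolation_coeff n v e = 0"
proof -
  let ?q = "CARD('a)"
  have "(\<Sum>i\<in>{0<..n}. ?q - 1 - e i) + (\<Sum>i\<in>{0<..n}. e i) = (\<Sum>i\<in>{0<..n}. ?q - 1 - e i + e i)"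
    by (simp add: sum.distrib)
  also have "\<dots> = (\<Sum>i\<in>{0<..n}. ?q - 1)"
  proof (intro sum.cong refl)
    fix i assume "i \<in> {0<..n}"
    then have "e i < ?q" using e by (auto simp: box_def)
    then show "?q - 1 - e i + e i = ?q - 1" by simp
  qed
  finally have "(\<Sum>i\<in>{0<..n}. (\<lambda>_. 0::nat) i) + (\<Sum>i\<in>{0<..n}. ?q - 1 - e i) < n * (?q - 1) - l"
    using big by simp
  from dual_annihilates_indicator_products[OF v _ _ this] show ?thesis
    by (simp add: interpolation_coeff_def)
qed

lemma dual_eq_form_on_chart:
  fixes v :: "(nat \<Rightarrow> 'a::{finite,field}) \<Rightarrow> 'a"
  assumes v: "\<forall>w\<in>PRM n (n * (CARD('a) - 1) - l). dot n v w = 0"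
  shows "\<exists>G\<in>forms n l. \<forall>y\<in>stratum n 0. v y = G y"
proof -
  let ?E = "box {0<..n} {..<CARD('a)} (\<lambda>_. 0)"
  let ?EL = "{e\<in>?E. (\<Sum>i\<in>{0<..n}. e i) \<le> l}"
  define hom where "hom e = e(0 := l - (\<Sum>i\<in>{0<..n}. e i))" for e :: "nat \<Rightarrow> nat"
  define G where "G p = (\<Sum>e\<in>?EL. interpolation_coeff n v e * monomial n (hom e) p)" for p
  have "hom e \<in> monomials n l" if e: "e \<in> ?EL" for e
  proof -
    have "(\<Sum>i\<in>{0<..n}. hom e i) = (\<Sum>i\<in>{0<..n}. e i)"
      by (rule sum.cong) (auto simp: hom_def)
    then show ?thesis
      using e sum_atMost_split_at[of 0 n "hom e"] by (auto simp: monomials_def hom_def box_def)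
  qed
  then have "G \<in> forms n l"
    unfolding G_def by (intro forms_sum forms_cmult monomial_in_forms)
  moreover have "v y = G y" if y: "y \<in> stratum n 0" for y
  proof -
    have "v y = (\<Sum>e\<in>?EL. interpolation_coeff n v e * (\<Prod>i\<in>{0<..n}. y i ^ e i))"
      unfolding affine_interpolation[OF y, of v]
      using interpolation_coeff_eq_0[OF v] finite_box[of "{0<..n}" "{..<CARD('a)}" "\<lambda>_. 0"]
      by (intro sum.mono_neutral_right) auto
    also have "\<dots> = G y"
      unfolding G_def
      by (rule sum.cong[OF refl]) (auto simp: monomial_stratum_0[OF y] hom_def intro!: prod.cong)
    finally show ?thesis .
  qed
  ultimately show ?thesis by blast
qed

text \<open>On the hyperplane \<open>x\<^sub>0 = 0\<close> the three factors vanish at the points whose leading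
  coordinate comes after \<open>x\<^sub>j\<close>, before \<open>x\<^sub>j\<close>, or which differ from \<open>P\<close> after \<open>x\<^sub>j\<close>,
  respectively; the degree is \<open>(q - 1 - l) + (n - 1)(q - 1)\<close>.\<close>

definition point_indicator :: "nat \<Rightarrow> nat \<Rightarrow> nat \<Rightarrow> (nat \<Rightarrow> 'a::{finite,field}) \<Rightarrow> (nat \<Rightarrow> 'a) \<Rightarrow> 'a" where
  "point_indicator n l j P = (\<lambda>x. x j ^ (CARD('a) - 1 - l)
      * (\<Prod>i\<in>{0<..<j}. x j ^ (CARD('a) - 1) - x i ^ (CARD('a) - 1))
      * (\<Prod>i\<in>{j<..n}. x j ^ (CARD('a) - 1) - (x i - P i * x j) ^ (CARD('a) - 1)))"

lemma point_indicator_in_forms: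
  assumes l: "l < CARD('a::{finite,field}) - 1" and j: "1 \<le> j" "j \<le> n"
  shows "(point_indicator n l j P :: (nat \<Rightarrow> 'a) \<Rightarrow> 'a) \<in> forms n (n * (CARD('a) - 1) - l)"
proof -
  let ?q = "CARD('a)"
  have "card {0<..<j} + card {j<..n} + 1 = n" using j by simp
  then have "card {0<..<j} * (?q - 1) + card {j<..n} * (?q - 1) + (?q - 1) = n * (?q - 1)"
    by (metis add_mult_distrib mult_1)
  then have deg: "(?q - 1 - l) * 1 + card {0<..<j} * ((?q - 1) * 1) + card {j<..n} * ((?q - 1) * 1)
      = n * (?q - 1) - l"
    using l by (simp; linarith)
  have "point_indicator n l j P \<in> (forms n ((?q - 1 - l) * 1 + card {0<..<j} * ((?q - 1) * 1)
      + card {j<..n} * ((?q - 1) * 1)) :: ((nat \<Rightarrow> 'a) \<Rightarrow> 'a) set)"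
    unfolding point_indicator_def using j
    by (intro forms_mult forms_power forms_prod forms_diff forms_cmult forms_coordinate) auto
  then show ?thesis unfolding deg .
qed

lemma point_indicator_at_infinity:
  fixes P Q :: "nat \<Rightarrow> 'a::{finite,field}"
  assumes l: "l < CARD('a) - 1" and P: "P \<in> stratum n j"
    and Q: "Q \<in> proj_points n" "Q 0 = 0"
  shows "point_indicator n l j P Q = (if Q = P then 1 else 0)"
proof -
  let ?q = "CARD('a)"
  have pow: "x ^ (?q - Suc 0) = (if x = 0 then 0 else 1)" for x :: 'a
    using power_card_minus_one[of x] by simp
  obtain j' where j': "j' \<le> n" "Q \<in> stratum n j'" using Q(1) by (rule proj_pointsE)
  have "j' \<noteq> 0" using j' Q(2) by (cases j') (auto simp: stratum_def)
  show ?thesis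
  proof (cases j' j rule: linorder_cases)
    case greater
    then have "Q j = 0" "Q \<noteq> P" using j' P by (auto simp: stratum_def)
    then show ?thesis using l by (simp add: point_indicator_def power_0_left)
  next
    case less
    then have "Q \<noteq> P" using j' P by (auto simp: stratum_def)
    moreover have "point_indicator n l j P Q = 0"
    proof (cases "Q j = 0")
      case True
      then show ?thesis using l by (simp add: point_indicator_def power_0_left)
    next
      case False
      have "(\<Prod>i\<in>{0<..<j}. Q j ^ (?q - 1) - Q i ^ (?q - 1)) = 0"
        using False j' less \<open>j' \<noteq> 0\<close>
        by (intro prod_zero) (auto simp: pow stratum_def intro!: bexI[of _ j'])
      then show ?thesis by (simp add: point_indicator_def)
    qed
    ultimately show ?thesis by simp
  next
    case equal
    then have Qj: "Q j = 1" and below: "\<forall>i<j. Q i = 0" using j' by (auto simp: stratum_def)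
    have "(\<Prod>i\<in>{0<..<j}. Q j ^ (?q - 1) - Q i ^ (?q - 1)) = 1"
      using Qj below two_le_card_field[where 'a='a] by (intro prod.neutral) (auto simp: power_0_left)
    moreover have "(\<Prod>i\<in>{j<..n}. Q j ^ (?q - 1) - (Q i - P i * Q j) ^ (?q - 1))
        = (\<Prod>i\<in>{j<..n}. if Q i = P i then 1 else 0)"
      using Qj by (intro prod.cong refl) (simp add: pow)
    moreover have "(\<forall>i\<in>{j<..n}. Q i = P i) \<longleftrightarrow> Q = P"
      using stratum_eqI[of Q n j P] j' P equal by auto
    ultimately show ?thesis using Qj by (simp add: point_indicator_def prod_indicator)
  qed
qed

lemma dual_eq_form_at_infinity:
  fixes v :: "(nat \<Rightarrow> 'a::{finite,field}) \<Rightarrow> 'a"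
  assumes n: "n \<ge> 1" and l: "l < CARD('a) - 1"
    and v: "\<forall>w\<in>PRM n (n * (CARD('a) - 1) - l). dot n v w = 0"
    and G: "G \<in> forms n l" and chart: "\<forall>y\<in>stratum n 0. v y = G y"
    and P: "P \<in> proj_points n" "P \<notin> stratum n 0"
  shows "v P = G P"
proof -
  let ?k = "n * (CARD('a) - 1) - l"
  obtain j where j: "j \<le> n" "P \<in> stratum n j" using P(1) by (rule proj_pointsE)
  have "1 \<le> j" using j P(2) by (cases j) auto
  let ?F = "point_indicator n l j P"
  have F: "?F \<in> forms n ?k" by (rule point_indicator_in_forms[OF l \<open>1 \<le> j\<close> j(1)])
  have "(\<Sum>Q\<in>proj_points n. v Q * ?F Q) = 0"
    using v F unfolding PRM_eq_image_forms by (auto simp: dot_word_of[symmetric])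
  moreover have "(\<Sum>Q\<in>proj_points n. G Q * ?F Q) = 0"
  proof (rule forms_orthogonal[OF n _ G F])
    have "l \<le> n * (CARD('a) - 1)" using l n by (metis le_trans less_imp_le mult_le_mono1 mult_1)
    then show "l + ?k = n * (CARD('a) - 1)" by simp
  qed
  ultimately have "(\<Sum>Q\<in>proj_points n. (v Q - G Q) * ?F Q) = 0"
    by (simp add: left_diff_distrib sum_subtractf)
  moreover have "(v Q - G Q) * ?F Q = (if Q = P then v P - G P else 0)" if "Q \<in> proj_points n" for Q
  proof (cases "Q \<in> stratum n 0")
    case True
    then show ?thesis using chart P(2) by auto
  next
    case False
    then show ?thesis
      using point_indicator_at_infinity[OF l j(2) that proj_points_not_stratum_0[OF that False]]
      by auto
  qed
  ultimately show ?thesis using P(1) by (simp add: finite_proj_points)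
qed

lemma dual_PRM_subset_PRM:
  assumes "n \<ge> 1" "l < CARD('a::{finite,field}) - 1"
  shows "dual_code n (PRM n (n * (CARD('a) - 1) - l)) \<subseteq> (PRM n l :: ((nat \<Rightarrow> 'a) \<Rightarrow> 'a) set)"
proof
  fix v :: "(nat \<Rightarrow> 'a) \<Rightarrow> 'a" assume "v \<in> dual_code n (PRM n (n * (CARD('a) - 1) - l))"
  then have v: "\<forall>w\<in>PRM n (n * (CARD('a) - 1) - l). dot n v w = 0" and "v \<in> words n"
    by (auto simp: dual_code_def)
  obtain G where G: "G \<in> forms n l" and chart: "\<forall>y\<in>stratum n 0. v y = G y"
    using dual_eq_form_on_chart[OF v] by blast
  have "v = word_of n G"
  proof
    fix p
    show "v p = word_of n G p"
      using dual_eq_form_at_infinity[OF assms v G chart, of p] chart \<open>v \<in> words n\<close>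
      by (cases "p \<in> stratum n 0") (auto simp: word_of_def words_def)
  qed
  then show "v \<in> PRM n l" using G unfolding PRM_eq_image_forms by blast
qed

lemma PRM_subset_dual_PRM:
  assumes "n \<ge> 1" "l + k = n * (CARD('a::{finite,field}) - 1)"
  shows "(PRM n l :: ((nat \<Rightarrow> 'a) \<Rightarrow> 'a) set) \<subseteq> dual_code n (PRM n k)"
proof
  fix w assume "w \<in> (PRM n l :: ((nat \<Rightarrow> 'a) \<Rightarrow> 'a) set)"
  then obtain f where f: "f \<in> forms n l" "w = word_of n f"
    unfolding PRM_eq_image_forms by blast
  have "dot n w (word_of n g) = 0" if "g \<in> forms n k" for g
    using forms_orthogonal[OF assms f(1) that] unfolding f(2) dot_word_of
    by (simp add: word_of_def cong: sum.cong)
  then show "w \<in> dual_code n (PRM n k)"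
    unfolding dual_code_def PRM_eq_image_forms f(2) by (auto simp: word_of_in_words)
qed

section \<open>The hull\<close>

lemma monomials_eq_last_power_iff:
  assumes "a \<in> monomials n l"
  shows "a = (\<lambda>i. if i = n then l else 0) \<longleftrightarrow> (\<forall>i<n. a i = 0)"
proof
  assume zero: "\<forall>i<n. a i = 0"
  then have "a n = l"
    using assms sum_atMost_split_at[of n n a] by (simp add: monomials_def)
  then show "a = (\<lambda>i. if i = n then l else 0)"
    using zero assms by (auto simp: monomials_def fun_eq_iff) (meson linorder_neqE_nat)
qed auto

lemma monomial_word_in_hull:
  assumes n: "n \<ge> 1" and l: "2 * l < CARD('a::{finite,field}) - 1"
    and b: "b \<in> monomials n l" "b \<noteq> (\<lambda>i. if i = n then l else 0)"
  shows "(monomial_word n b :: (nat \<Rightarrow> 'a) \<Rightarrow> 'a) \<in> code_hull n (PRM n (n * (CARD('a) - 1) - l))"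
proof -
  let ?k = "n * (CARD('a) - 1) - l"
  obtain z where "z < n" "0 < b z"
    using b monomials_eq_last_power_iff[OF b(1)] by auto
  then have "(monomial_word n b :: (nat \<Rightarrow> 'a) \<Rightarrow> 'a) \<in> PRM n ?k"
    by (rule monomial_word_in_PRM_complement[OF l b(1)])
  moreover have "l + ?k = n * (CARD('a) - 1)"
    using l n by (simp add: le_trans[OF _ mult_le_mono1[OF n]])
  then have "(monomial_word n b :: (nat \<Rightarrow> 'a) \<Rightarrow> 'a) \<in> dual_code n (PRM n ?k)"
    using PRM_subset_dual_PRM[OF n] monomial_word_in_PRM[OF b(1)] by blast
  ultimately show ?thesis by (simp add: code_hull_def)
qed

lemma dot_lincomb_monomial_words_last_power:
  assumes l: "2 * l < CARD('a::{finite,field}) - 1"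
  shows "dot n (\<Sum>a\<in>monomials n l. (\<lambda>p. c a * monomial_word n a p))
      (monomial_word n (\<lambda>i. if i = n then l else 0)) = (c (\<lambda>i. if i = n then l else 0) :: 'a)"
proof -
  let ?M = "monomials n l"
  define e where "e i = (if i = n then l else (0::nat))" for i
  have e: "e \<in> ?M" by (simp add: e_def monomials_def)
  have "dot n (\<Sum>a\<in>?M. (\<lambda>p. c a * monomial_word n a p)) (monomial_word n e)
      = (\<Sum>a\<in>?M. c a * dot n (monomial_word n a) (monomial_word n e))"
    by (rule dot_sum_left)
  also have "\<dots> = (\<Sum>a\<in>?M. if a = e then c a else 0)"
  proof (rule sum.cong[OF refl])
    fix a assume a: "a \<in> ?M"
    have "dot n (monomial_word n a) (monomial_word n e) = (if \<forall>i<n. a i + e i = 0 then 1 else (0::'a))"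
      unfolding dot_word_of using sum_monomial_mult_low_degree[OF a e l]
      by (simp add: word_of_def cong: sum.cong)
    also have "(\<forall>i<n. a i + e i = 0) \<longleftrightarrow> a = e"
      using monomials_eq_last_power_iff[OF a] by (auto simp: e_def)
    finally show "c a * dot n (monomial_word n a) (monomial_word n e) = (if a = e then c a else 0)"
      by simp
  qed
  also have "\<dots> = c e" using e finite_monomials by simp
  finally show ?thesis by (simp add: e_def[abs_def])
qed

text \<open>The coefficient of \<open>x\<^sub>n\<^sup>l\<close> of a word of \<open>C\<^sub>l\<close> in the hull is its product with
  \<open>x\<^sub>n\<^sup>l\<close>, which vanishes because \<open>x\<^sub>n\<^sup>l \<in> C\<^sub>l \<subseteq> C\<^sub>k\<^sup>\<bottom>\<close>.\<close>

lemma hull_subset_span_monomial_words: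
  assumes n: "n \<ge> 1" and l: "2 * l < CARD('a::{finite,field}) - 1"
  shows "code_hull n (PRM n (n * (CARD('a) - 1) - l))
    \<subseteq> word_space.span ((\<lambda>a. monomial_word n a :: (nat \<Rightarrow> 'a) \<Rightarrow> 'a)
         ` (monomials n l - {\<lambda>i. if i = n then l else 0}))"
proof
  let ?k = "n * (CARD('a) - 1) - l"
  let ?M = "monomials n l"
  let ?e = "\<lambda>i. if i = n then l else 0"
  have e: "?e \<in> ?M" by (simp add: monomials_def)
  have lk: "l + ?k = n * (CARD('a) - 1)"
    using l n by (simp add: le_trans[OF _ mult_le_mono1[OF n]])
  fix v :: "(nat \<Rightarrow> 'a) \<Rightarrow> 'a" assume "v \<in> code_hull n (PRM n ?k)"
  then have vk: "v \<in> PRM n ?k" and "v \<in> dual_code n (PRM n ?k)"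
    by (auto simp: code_hull_def)
  moreover have "l < CARD('a) - 1" using l by simp
  ultimately have "v \<in> PRM n l" using dual_PRM_subset_PRM[OF n] by blast
  then obtain c where c: "v = (\<Sum>a\<in>?M. (\<lambda>p. c a * monomial_word n a p))"
    unfolding PRM_eq_image_forms by (auto elim!: formsE simp: word_of_sum)
  have "c ?e = dot n (monomial_word n ?e) v"
    using dot_lincomb_monomial_words_last_power[OF l, of n c] c by (simp add: dot_commute)
  also have "\<dots> = 0"
    using PRM_subset_dual_PRM[OF n lk] monomial_word_in_PRM[OF e] vk by (auto simp: dual_code_def)
  finally have "v = (\<Sum>a\<in>?M - {?e}. (\<lambda>p. c a * monomial_word n a p))"
    using c e finite_monomials by (simp add: sum.remove zero_fun_def)
  also have "\<dots> \<in> word_space.span ((\<lambda>a. monomial_word n a) ` (?M - {?e}))"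
    by (intro word_space.span_sum word_space.span_scale[where c = "c _", simplified]
        word_space.span_base) auto
  finally show "v \<in> word_space.span ((\<lambda>a. monomial_word n a) ` (?M - {?e}))" .
qed

lemma code_dim_hull_PRM:
  assumes n: "n \<ge> 1" and l: "2 * l < CARD('a::{finite,field}) - 1"
  shows "code_dim (code_hull n (PRM n (n * (CARD('a) - 1) - l) :: ((nat \<Rightarrow> 'a) \<Rightarrow> 'a) set))
    = ((n + l) choose l) - 1"
proof -
  let ?M = "monomials n l - {\<lambda>i. if i = n then l else 0}"
  have l': "l < CARD('a) - 1" using l by simp
  have "word_space.dim (code_hull n (PRM n (n * (CARD('a) - 1) - l)) :: ((nat \<Rightarrow> 'a) \<Rightarrow> 'a) set)
      = card ?M"
  proof (rule word_space.dim_unique)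
    show "(\<lambda>a. monomial_word n a) ` ?M \<subseteq> (code_hull n (PRM n (n * (CARD('a) - 1) - l)) :: ((nat \<Rightarrow> 'a) \<Rightarrow> 'a) set)"
      using monomial_word_in_hull[OF n l] by blast
    show "word_space.independent ((\<lambda>a. monomial_word n a :: (nat \<Rightarrow> 'a) \<Rightarrow> 'a) ` ?M)"
      by (rule word_space.independent_mono[OF independent_monomial_words[OF l']]) blast
    show "card ((\<lambda>a. monomial_word n a :: (nat \<Rightarrow> 'a) \<Rightarrow> 'a) ` ?M) = card ?M"
      by (rule card_image, rule inj_on_subset[OF inj_on_monomial_word[OF l']]) blast
  qed (rule hull_subset_span_monomial_words[OF n l])
  moreover have "(\<lambda>i. if i = n then l else 0) \<in> monomials n l"
    by (simp add: monomials_def)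
  ultimately show ?thesis
    using finite_monomials by (simp add: code_dim_def card_Diff_singleton card_monomials)
qed

theorem mainTheorem9:
  fixes q n k :: nat
  assumes "CARD('a::{finite,field}) = q"
    and "\<exists>p m. prime p \<and> m \<ge> 1 \<and> q = p ^ m"
    and "n \<ge> 1"
    and "real n * (real q - 1) - (real q - 1) / 2 < real k"
    and "k \<le> n * (q - 1)"
  shows "let l = n * (q - 1) - k in
         code_dim (code_hull n (PRM n k :: ((nat \<Rightarrow> 'a) \<Rightarrow> 'a) set))
           = code_dim (PRM n l :: ((nat \<Rightarrow> 'a) \<Rightarrow> 'a) set) - 1
       \<and> code_dim (PRM n l :: ((nat \<Rightarrow> 'a) \<Rightarrow> 'a) set) - 1
           = ((n + l) choose l) - 1"
proof -
  define l where "l = n * (q - 1) - k"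
  have "2 \<le> q" using assms(1) two_le_card_field[where 'a='a] by simp
  then have "real (q - 1) = real q - 1" by (simp add: of_nat_diff)
  moreover have "real l = real n * (real q - 1) - real k"
    unfolding l_def using assms(5) \<open>real (q - 1) = real q - 1\<close> by (simp add: of_nat_diff)
  ultimately have "real (2 * l) < real (q - 1)" using assms(4) by (simp add: field_simps; linarith)
  then have l: "2 * l < CARD('a) - 1" using assms(1) by linarith
  have k: "k = n * (CARD('a) - 1) - l" unfolding l_def using assms(1,5) by simp
  have "code_dim (code_hull n (PRM n k :: ((nat \<Rightarrow> 'a) \<Rightarrow> 'a) set)) = ((n + l) choose l) - 1"
    unfolding k by (rule code_dim_hull_PRM[OF assms(3) l])
  moreover have "code_dim (PRM n l :: ((nat \<Rightarrow> 'a) \<Rightarrow> 'a) set) = (n + l) choose l"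
    using l by (intro code_dim_PRM) simp
  ultimately show ?thesis unfolding Let_def l_def[symmetric] by simp
qed

end
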